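(* Let $\tau>0$ and $\alpha,\beta\in\mathbb R$. Define $\mathcal M_\tau(g)=\frac1\tau\int_0^\tau\sigma g(\sigma)\,d\sigma$, so that $\mathcal M_\tau(\mathrm e^{i\alpha\cdot})=\frac1\tau\int_0^\tau\sigma\mathrm e^{i\alpha\sigma}\,d\sigma$. Then: (i) $$\int_0^\tau\Big(\mathrm e^{is\alpha}+i\beta\,\mathrm e^{is\beta}\,\mathcal M_\tau(\mathrm e^{i\alpha\cdot})\Big)\,ds=\tau\varphi(i\tau\alpha)-\tau\big(\mathrm e^{i\tau\beta}-1\big)\psi(i\tau\alpha);$$ (ii) the function $$\mathcal R_2(\alpha,\beta,\tau):=\int_0^\tau\mathrm e^{is(\alpha+\beta)}\,ds-\int_0^\tau\Big(\mathrm e^{is\alpha}+i\beta\,\mathrm e^{is\beta}\,\mathcal M_\tau(\mathrm e^{i\alpha\cdot})\Big)\,ds$$ satisfies $|\mathcal R_2(\alpha,\beta,\tau)|\le C\tau^3|\beta|^2$ for an absolute constant $C$ independent of $\alpha,\beta,\tau$.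
   Context: $\varphi(z)=\frac{e^z-1}{z}$ for $z\neq0$, $\varphi(0)=1$; $\psi(z)=\frac{e^z-1-ze^z}{z^2}$ for $z\ne0$, $\psi(0)=-\frac12$. *)

theory Defs
  imports "HOL-Analysis.Analysis"
begin

definition phi :: "complex \<Rightarrow> complex" where
  "phi z = (if z = 0 then 1 else (exp z - 1) / z)"

definition psi :: "complex \<Rightarrow> complex" where
  "psi z = (if z = 0 then - (1/2) else (exp z - 1 - z * exp z) / z^2)"

definition Mtau :: "real \<Rightarrow> (real \<Rightarrow> complex) \<Rightarrow> complex" where
  "Mtau \<tau> g = complex_of_real (1 / \<tau>) * integral {0..\<tau>} (\<lambda>\<sigma>. complex_of_real \<sigma> * g \<sigma>)"

definition R2 :: "real \<Rightarrow> real \<Rightarrow> real \<Rightarrow> complex" where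
  "R2 \<alpha> \<beta> \<tau> =
     integral {0..\<tau>} (\<lambda>s. exp (\<i> * of_real (s * (\<alpha> + \<beta>))))
   - integral {0..\<tau>} (\<lambda>s. exp (\<i> * of_real (s * \<alpha>))
        + \<i> * of_real \<beta> * exp (\<i> * of_real (s * \<beta>))
          * Mtau \<tau> (\<lambda>\<sigma>. exp (\<i> * of_real (\<alpha> * \<sigma>))))"

end

theory Submission
  imports Defs "HOL-Probability.Characteristic_Functions"
begin

text \<open>Everything reduces to the elementary integrals
  int_0^tau e^(cs) ds = tau phi(c tau) and int_0^tau s e^(cs) ds = -tau^2 psi(c tau), the second
  giving M_tau(e^(i alpha .)) = -tau psi(i tau alpha).  For (ii), subtracting the integral of the
  first-order Taylor expansion e^(i s beta) ~ 1 + i s beta splits R_2 into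
  int_0^tau e^(i s alpha) (e^(i s beta) - 1 - i s beta) ds + (i tau beta - (e^(i tau beta) - 1)) M_tau(e^(i alpha .)).
  Both Taylor remainders are at most (tau beta)^2/2 and |M_tau(e^(i alpha .))| <= tau, so C = 1 works.\<close>

lemma mult_phi_eq: "z * phi z = exp z - 1"
  by (simp add: phi_def)

lemma has_integral_restrict_complex_antiderivative:
  fixes F f :: "complex \<Rightarrow> complex"
  assumes "\<tau> \<ge> 0" "\<And>z. (F has_field_derivative f z) (at z)"
  shows "((\<lambda>s. f (of_real s)) has_integral F (of_real \<tau>) - F 0) {0..\<tau>}"
proof -
  have "((\<lambda>s. F (of_real s)) has_vector_derivative f (of_real s)) (at s within {0..\<tau>})" for s
    using has_vector_derivative_real_field[OF assms(2)] by (rule has_vector_derivative_at_within)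
  from fundamental_theorem_of_calculus[OF assms(1), of "\<lambda>s. F (of_real s)", OF this]
  show ?thesis
    by simp
qed

lemma exp_mult_has_integral_phi:
  fixes c :: complex
  assumes "\<tau> \<ge> 0"
  shows "((\<lambda>s. exp (of_real s * c)) has_integral of_real \<tau> * phi (of_real \<tau> * c)) {0..\<tau>}"
proof (cases "c = 0")
  case True
  then show ?thesis
    using has_integral_const_real[of "1::complex" 0 \<tau>] assms
    by (simp add: phi_def scaleR_conv_of_real)
next
  case False
  have deriv: "((\<lambda>z. exp (z * c) / c) has_field_derivative exp (z * c)) (at z)" for z
    using False by (auto intro!: derivative_eq_intros)
  have "of_real \<tau> * phi (of_real \<tau> * c) = exp (of_real \<tau> * c) / c - exp (0 * c) / c"
    using False by (cases "\<tau> = 0") (simp_all add: phi_def field_simps)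
  with has_integral_restrict_complex_antiderivative[OF assms deriv] show ?thesis
    by simp
qed

lemma mult_exp_mult_has_integral_psi:
  fixes c :: complex
  assumes "\<tau> \<ge> 0"
  shows "((\<lambda>s. of_real s * exp (of_real s * c)) has_integral
           - (of_real \<tau> ^ 2 * psi (of_real \<tau> * c))) {0..\<tau>}"
proof (cases "c = 0")
  case True
  have "((\<lambda>z. z ^ 2 / 2) has_field_derivative z * exp (z * c)) (at z)" for z
    using True by (auto intro!: derivative_eq_intros)
  from has_integral_restrict_complex_antiderivative[OF assms this] show ?thesis
    using True by (simp add: psi_def)
next
  case False
  have deriv: "((\<lambda>z. exp (z * c) * (z / c - 1 / c ^ 2)) has_field_derivative z * exp (z * c)) (at z)" for z
    using False by (auto intro!: derivative_eq_intros simp: field_simps power2_eq_square)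
  have "- (of_real \<tau> ^ 2 * psi (of_real \<tau> * c))
          = exp (of_real \<tau> * c) * (of_real \<tau> / c - 1 / c ^ 2) - exp (0 * c) * (0 / c - 1 / c ^ 2)"
    using False by (cases "\<tau> = 0") (simp_all add: psi_def field_simps power2_eq_square)
  with has_integral_restrict_complex_antiderivative[OF assms deriv] show ?thesis
    by simp
qed

lemma exp_ii_has_integral:
  assumes "\<tau> \<ge> 0"
  shows "((\<lambda>s. exp (\<i> * of_real (s * a))) has_integral of_real \<tau> * phi (\<i> * of_real (\<tau> * a))) {0..\<tau>}"
  using exp_mult_has_integral_phi[OF assms, of "\<i> * of_real a"] by (simp add: mult_ac)

lemma Mtau_exp_ii:
  assumes "\<tau> > 0"
  shows "Mtau \<tau> (\<lambda>\<sigma>. exp (\<i> * of_real (\<alpha> * \<sigma>))) = - of_real \<tau> * psi (\<i> * of_real (\<tau> * \<alpha>))"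
proof -
  have "((\<lambda>\<sigma>. of_real \<sigma> * exp (\<i> * of_real (\<alpha> * \<sigma>))) has_integral
          - (of_real \<tau> ^ 2 * psi (\<i> * of_real (\<tau> * \<alpha>)))) {0..\<tau>}"
    using mult_exp_mult_has_integral_psi[of \<tau> "\<i> * of_real \<alpha>"] assms by (simp add: mult_ac)
  then show ?thesis
    using assms by (simp add: Mtau_def integral_unique power2_eq_square)
qed

lemma norm_Mtau_le:
  assumes "\<tau> > 0" "continuous_on {0..\<tau>} g" "\<And>\<sigma>. \<sigma> \<in> {0..\<tau>} \<Longrightarrow> norm (g \<sigma>) \<le> B"
  shows "norm (Mtau \<tau> g) \<le> \<tau> * B"
proof -
  have "norm (integral {0..\<tau>} (\<lambda>\<sigma>. of_real \<sigma> * g \<sigma>)) \<le> (\<tau> * B) * (\<tau> - 0)"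
  proof (rule integral_bound)
    show "continuous_on {0..\<tau>} (\<lambda>\<sigma>. complex_of_real \<sigma> * g \<sigma>)"
      using assms(2) by (intro continuous_intros)
    show "norm (of_real \<sigma> * g \<sigma>) \<le> \<tau> * B" if "\<sigma> \<in> {0..\<tau>}" for \<sigma>
      using that assms(3)[OF that] norm_ge_zero[of "g \<sigma>"]
      by (auto simp: norm_mult intro: mult_mono)
  qed (use assms in auto)
  then show ?thesis
    using assms(1) by (simp add: Mtau_def norm_divide field_simps)
qed

lemma norm_exp_ii_minus_linear_le: "cmod (exp (\<i> * of_real x) - 1 - \<i> * of_real x) \<le> x ^ 2 / 2"
  using iexp_approx1[of x 1] by (simp add: diff_diff_add power2_eq_square)

lemma first_order_approximant_has_integral:
  assumes "\<tau> \<ge> 0"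
  shows "((\<lambda>s. exp (\<i> * of_real (s * \<alpha>)) + \<i> * of_real \<beta> * exp (\<i> * of_real (s * \<beta>)) * m)
           has_integral of_real \<tau> * phi (\<i> * of_real (\<tau> * \<alpha>)) + (exp (\<i> * of_real (\<tau> * \<beta>)) - 1) * m)
           {0..\<tau>}"
proof -
  have "((\<lambda>s. \<i> * of_real \<beta> * exp (\<i> * of_real (s * \<beta>))) has_integral
          \<i> * of_real \<beta> * (of_real \<tau> * phi (\<i> * of_real (\<tau> * \<beta>)))) {0..\<tau>}"
    using exp_ii_has_integral[OF assms] by (rule has_integral_mult_right)
  also have "\<i> * of_real \<beta> * (of_real \<tau> * phi (\<i> * of_real (\<tau> * \<beta>))) = exp (\<i> * of_real (\<tau> * \<beta>)) - 1"
    using mult_phi_eq[of "\<i> * of_real (\<tau> * \<beta>)"] by (simp add: mult_ac)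
  finally show ?thesis
    using exp_ii_has_integral[OF assms] by (intro has_integral_add has_integral_mult_left)
qed

lemma integral_first_order_approximant:
  assumes "\<tau> > 0"
  shows "integral {0..\<tau>} (\<lambda>s. exp (\<i> * of_real (s * \<alpha>))
                + \<i> * of_real \<beta> * exp (\<i> * of_real (s * \<beta>))
                  * Mtau \<tau> (\<lambda>\<sigma>. exp (\<i> * of_real (\<alpha> * \<sigma>))))
            = of_real \<tau> * phi (\<i> * of_real (\<tau> * \<alpha>))
              - of_real \<tau> * (exp (\<i> * of_real (\<tau> * \<beta>)) - 1) * psi (\<i> * of_real (\<tau> * \<alpha>))"
  unfolding Mtau_exp_ii[OF assms]
  by (subst integral_unique[OF first_order_approximant_has_integral])
     (use assms in \<open>simp_all add: algebra_simps\<close>)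

lemma R2_eq_Taylor_remainders:
  fixes \<alpha> \<beta> \<tau> :: real
  assumes tau_pos: "\<tau> > 0"
  defines "M \<equiv> Mtau \<tau> (\<lambda>\<sigma>. exp (\<i> * of_real (\<alpha> * \<sigma>)))"
  shows "R2 \<alpha> \<beta> \<tau> =
           integral {0..\<tau>} (\<lambda>s. exp (\<i> * of_real (s * \<alpha>))
                              * (exp (\<i> * of_real (s * \<beta>)) - 1 - \<i> * of_real (s * \<beta>)))
           + (\<i> * of_real (\<tau> * \<beta>) - (exp (\<i> * of_real (\<tau> * \<beta>)) - 1)) * M"
proof -
  have M_eq: "M = - of_real \<tau> * psi (\<i> * of_real (\<tau> * \<alpha>))"
    unfolding M_def by (rule Mtau_exp_ii[OF tau_pos])
  define I where "I = integral {0..\<tau>} (\<lambda>s. exp (\<i> * of_real (s * (\<alpha> + \<beta>))))"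
  have "((\<lambda>s. exp (\<i> * of_real (s * (\<alpha> + \<beta>)))) has_integral I) {0..\<tau>}"
    unfolding I_def by (intro integrable_integral integrable_continuous_real continuous_intros)
  moreover have "((\<lambda>s. \<i> * of_real \<beta> * (of_real s * exp (\<i> * of_real (\<alpha> * s)))) has_integral
                  \<i> * of_real \<beta> * (of_real \<tau> * M)) {0..\<tau>}"
    using mult_exp_mult_has_integral_psi[of \<tau> "\<i> * of_real \<alpha>"] tau_pos
    by (intro has_integral_mult_right) (simp add: M_eq mult_ac power2_eq_square)
  ultimately have "((\<lambda>s. exp (\<i> * of_real (s * (\<alpha> + \<beta>))) - exp (\<i> * of_real (s * \<alpha>))
                        - \<i> * of_real \<beta> * (of_real s * exp (\<i> * of_real (\<alpha> * s)))) has_integral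
                    I - of_real \<tau> * phi (\<i> * of_real (\<tau> * \<alpha>)) - \<i> * of_real \<beta> * (of_real \<tau> * M))
                    {0..\<tau>}"
    using exp_ii_has_integral[of \<tau> \<alpha>] tau_pos by (intro has_integral_diff) auto
  also have "(\<lambda>s. exp (\<i> * of_real (s * (\<alpha> + \<beta>))) - exp (\<i> * of_real (s * \<alpha>))
                    - \<i> * of_real \<beta> * (of_real s * exp (\<i> * of_real (\<alpha> * s))))
           = (\<lambda>s. exp (\<i> * of_real (s * \<alpha>))
                    * (exp (\<i> * of_real (s * \<beta>)) - 1 - \<i> * of_real (s * \<beta>)))"
    by (auto simp: fun_eq_iff algebra_simps simp flip: exp_add)
  moreover have "R2 \<alpha> \<beta> \<tau> = I - (of_real \<tau> * phi (\<i> * of_real (\<tau> * \<alpha>))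
                                   + (exp (\<i> * of_real (\<tau> * \<beta>)) - 1) * M)"
    using first_order_approximant_has_integral[of \<tau> \<alpha> \<beta> M] tau_pos
    by (simp add: R2_def I_def M_def integral_unique)
  ultimately show ?thesis
    by (simp add: integral_unique algebra_simps)
qed

lemma norm_R2_le:
  assumes "\<tau> > 0"
  shows "cmod (R2 \<alpha> \<beta> \<tau>) \<le> \<tau> ^ 3 * \<beta> ^ 2"
proof -
  define M where "M = Mtau \<tau> (\<lambda>\<sigma>. exp (\<i> * of_real (\<alpha> * \<sigma>)))"
  have remainder_integral: "cmod (integral {0..\<tau>} (\<lambda>s. exp (\<i> * of_real (s * \<alpha>))
              * (exp (\<i> * of_real (s * \<beta>)) - 1 - \<i> * of_real (s * \<beta>)))) \<le> (\<tau> ^ 2 * \<beta> ^ 2 / 2) * (\<tau> - 0)"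
  proof (rule integral_bound)
    fix s assume s: "s \<in> {0..\<tau>}"
    have "(s * \<beta>) ^ 2 / 2 \<le> \<tau> ^ 2 * \<beta> ^ 2 / 2"
      using s by (auto simp: power_mult_distrib intro!: mult_right_mono power_mono)
    then show "cmod (exp (\<i> * of_real (s * \<alpha>)) * (exp (\<i> * of_real (s * \<beta>)) - 1 - \<i> * of_real (s * \<beta>)))
                 \<le> \<tau> ^ 2 * \<beta> ^ 2 / 2"
      using norm_exp_ii_minus_linear_le[of "s * \<beta>"] by (simp add: norm_mult)
  qed (use assms in \<open>auto intro!: continuous_intros\<close>)
  have remainder_endpoint: "cmod (\<i> * of_real (\<tau> * \<beta>) - (exp (\<i> * of_real (\<tau> * \<beta>)) - 1)) \<le> (\<tau> * \<beta>) ^ 2 / 2"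
    using norm_exp_ii_minus_linear_le[of "\<tau> * \<beta>"] by (simp add: norm_minus_commute algebra_simps)
  have norm_M: "cmod M \<le> \<tau> * 1"
    unfolding M_def using assms by (intro norm_Mtau_le continuous_intros) auto
  have "cmod (R2 \<alpha> \<beta> \<tau>) \<le> cmod (integral {0..\<tau>} (\<lambda>s. exp (\<i> * of_real (s * \<alpha>))
              * (exp (\<i> * of_real (s * \<beta>)) - 1 - \<i> * of_real (s * \<beta>))))
          + cmod (\<i> * of_real (\<tau> * \<beta>) - (exp (\<i> * of_real (\<tau> * \<beta>)) - 1)) * cmod M"
    unfolding R2_eq_Taylor_remainders[OF assms] M_def[symmetric]
    by (rule order.trans[OF norm_triangle_ineq]) (simp add: norm_mult)
  also have "\<dots> \<le> (\<tau> ^ 2 * \<beta> ^ 2 / 2) * \<tau> + ((\<tau> * \<beta>) ^ 2 / 2) * \<tau>"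
    using remainder_integral remainder_endpoint norm_M by (intro add_mono mult_mono) auto
  also have "\<dots> = \<tau> ^ 3 * \<beta> ^ 2"
    by (simp add: power2_eq_square power3_eq_cube)
  finally show ?thesis .
qed

theorem lemma2p2:
  shows "(\<forall>\<tau> \<alpha> \<beta>. \<tau> > 0 \<longrightarrow>
            integral {0..\<tau>} (\<lambda>s. exp (\<i> * of_real (s * \<alpha>))
                + \<i> * of_real \<beta> * exp (\<i> * of_real (s * \<beta>))
                  * Mtau \<tau> (\<lambda>\<sigma>. exp (\<i> * of_real (\<alpha> * \<sigma>))))
            = of_real \<tau> * phi (\<i> * of_real (\<tau> * \<alpha>))
              - of_real \<tau> * (exp (\<i> * of_real (\<tau> * \<beta>)) - 1) * psi (\<i> * of_real (\<tau> * \<alpha>)))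
       \<and> (\<exists>C::real. \<forall>\<alpha> \<beta> \<tau>. \<tau> > 0 \<longrightarrow> cmod (R2 \<alpha> \<beta> \<tau>) \<le> C * \<tau>^3 * \<bar>\<beta>\<bar>^2)"
proof
  show "\<exists>C::real. \<forall>\<alpha> \<beta> \<tau>. \<tau> > 0 \<longrightarrow> cmod (R2 \<alpha> \<beta> \<tau>) \<le> C * \<tau>^3 * \<bar>\<beta>\<bar>^2"
    using norm_R2_le by (intro exI[of _ 1]) simp
qed (use integral_first_order_approximant in blast)

end
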